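(* Let $n\ge 2$, $t\ge 3$, and let $L$ be an $\mathbb{F}_q$-linear set of pseudoregulus type of $\Lambda=PG(2n-1,q^t)$. Then the pseudoregulus associated with $L$ is exactly the set of all lines of $\Lambda$ having weight $t$ in $L$. In particular, the pseudoregulus associated with $L$ and its two transversal spaces are uniquely determined by $L$.
   Context: Let $V$ be a vector space over $\mathbb{F}_{q^t}$ ($q$ a prime power), $\langle \mathbf u\rangle_{q^t}$ the projective point defined by $\mathbf u\ne\mathbf 0$. For an $\mathbb{F}_q$-subspace $U$ of $V$, $L_U=\{\langle \mathbf u\rangle_{q^t}:\mathbf u\in U\setminus\{\mathbf 0\}\}$ is the $\mathbb{F}_q$-linear set defined by $U$, of rank $\dim_{\mathbb{F}_q}U$; the weight of a subspace $PG(W,\mathbb{F}_{q^t})$ in $L_U$ is $\dim_{\mathbb{F}_q}(W\cap U)$; $L_U$ is scattered if every point has weight 1. Definition (pseudoregulus type): for integers $t,n\ge 2$, a scattered $\mathbb{F}_q$-linear set $L=L_U$ of $\Lambda=PG(V,\mathbb{F}_{q^t})=PG(2n-1,q^t)$ of rank $tn$ is of pseudoregulus type if (i) there exist $m=(q^{nt}-1)/(q^t-1)$ pairwise disjoint lines $s_1,\dots,s_m$ of $\Lambda$ each having weight $t$ in $L$ (i.e. $|L\cap s_i|=(q^t-1)/(q-1)$), and (ii) there exist exactly two $(n-1)$-dimensional subspaces $T_1,T_2$ of $\Lambda$ disjoint from $L$ such that $T_j\cap s_i\neq\emptyset$ for all $i=1,\dots,m$, $j=1,2$. The set $\{s_1,\dots,s_m\}$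 is called the pseudoregulus associated with $L$, and $T_1,T_2$ its transversal spaces. *)

theory Defs
  imports Main
begin

text \<open>Ambient field F_{q^t} is a finite field type 'a; F_q is a subfield K of it.
  The vector space V = F_{q^t}^{2n} is represented as functions 'm \<Rightarrow> 'a with CARD('m) = 2n.\<close>

definition vzero :: "'m \<Rightarrow> 'a::field" where "vzero = (\<lambda>i. 0)"
definition vadd :: "('m \<Rightarrow> 'a::field) \<Rightarrow> ('m \<Rightarrow> 'a) \<Rightarrow> ('m \<Rightarrow> 'a)" where
  "vadd u v = (\<lambda>i. u i + v i)"
definition smul :: "'a::field \<Rightarrow> ('m \<Rightarrow> 'a) \<Rightarrow> ('m \<Rightarrow> 'a)" where
  "smul c v = (\<lambda>i. c * v i)"

definition subfield :: "'a::field set \<Rightarrow> bool" where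
  "subfield K \<longleftrightarrow> 0 \<in> K \<and> 1 \<in> K \<and> (\<forall>a\<in>K. \<forall>b\<in>K. a + b \<in> K \<and> a * b \<in> K)
     \<and> (\<forall>a\<in>K. - a \<in> K) \<and> (\<forall>a\<in>K. a \<noteq> 0 \<longrightarrow> inverse a \<in> K)"

text \<open>K-subspace of V (for K = UNIV: an F_{q^t}-subspace).\<close>
definition Ksubspace :: "'a::field set \<Rightarrow> ('m \<Rightarrow> 'a) set \<Rightarrow> bool" where
  "Ksubspace K W \<longleftrightarrow> vzero \<in> W \<and> (\<forall>u\<in>W. \<forall>v\<in>W. vadd u v \<in> W)
     \<and> (\<forall>c\<in>K. \<forall>v\<in>W. smul c v \<in> W)"

definition Kdim :: "'a::field set \<Rightarrow> ('m \<Rightarrow> 'a) set \<Rightarrow> nat" where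
  "Kdim K W = (THE d. card W = card K ^ d)"

definition pt :: "('m \<Rightarrow> 'a::field) \<Rightarrow> ('m \<Rightarrow> 'a) set" where
  "pt u = {smul c u | c. True}"

definition linset :: "('m \<Rightarrow> 'a::field) set \<Rightarrow> ('m \<Rightarrow> 'a) set set" where
  "linset U = {pt u | u. u \<in> U \<and> u \<noteq> vzero}"

definition proj_subspace :: "nat \<Rightarrow> ('m \<Rightarrow> 'a::{field,finite}) set \<Rightarrow> bool" where
  "proj_subspace k W \<longleftrightarrow> Ksubspace UNIV W \<and> Kdim UNIV W = k + 1"

definition is_line :: "('m \<Rightarrow> 'a::{field,finite}) set \<Rightarrow> bool" where
  "is_line s \<longleftrightarrow> proj_subspace 1 s"

definition weight :: "'a::field set \<Rightarrow> ('m \<Rightarrow> 'a) set \<Rightarrow> ('m \<Rightarrow> 'a) set \<Rightarrow> nat" where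
  "weight K U W = Kdim K (W \<inter> U)"

definition scattered :: "'a::field set \<Rightarrow> ('m \<Rightarrow> 'a) set \<Rightarrow> bool" where
  "scattered K U \<longleftrightarrow> (\<forall>P\<in>linset U. weight K U P = 1)"

definition proj_meet :: "('m \<Rightarrow> 'a::field) set \<Rightarrow> ('m \<Rightarrow> 'a) set \<Rightarrow> bool" where
  "proj_meet A B \<longleftrightarrow> (\<exists>u. u \<noteq> vzero \<and> u \<in> A \<and> u \<in> B)"

definition transversals ::
  "nat \<Rightarrow> ('m \<Rightarrow> 'a::{field,finite}) set \<Rightarrow> ('m \<Rightarrow> 'a) set set \<Rightarrow> ('m \<Rightarrow> 'a) set set" where
  "transversals n U S = {T. proj_subspace (n - 1) T \<and> (\<forall>P\<in>linset U. \<not> P \<subseteq> T)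
      \<and> (\<forall>s\<in>S. proj_meet T s)}"

text \<open>U defines a scattered linear set L_U of rank tn of PG(2n-1,q^t) of pseudoregulus type,
  with associated pseudoregulus S (its transversal spaces are then transversals n U S).\<close>
definition pseudoregulus_type ::
  "'a::{field,finite} set \<Rightarrow> nat \<Rightarrow> nat \<Rightarrow> ('m \<Rightarrow> 'a) set \<Rightarrow> ('m \<Rightarrow> 'a) set set \<Rightarrow> bool" where
  "pseudoregulus_type K n t U S \<longleftrightarrow>
     Ksubspace K U \<and> scattered K U \<and> Kdim K U = t * n
     \<and> (\<forall>s\<in>S. is_line s \<and> weight K U s = t)
     \<and> card S = (card K ^ (n * t) - 1) div (card K ^ t - 1)
     \<and> (\<forall>s1\<in>S. \<forall>s2\<in>S. s1 \<noteq> s2 \<longrightarrow> \<not> proj_meet s1 s2)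
     \<and> card (transversals n U S) = 2"

end

theory Submission
  imports Defs "HOL-Library.Function_Algebras" "HOL-Library.Cardinality"
begin

(* Everything is done by counting in the finite vector space V = F_{q^t}^{2n}:
   * a K-subspace has |K|^d elements and a proper K-subspace is at least |K| times smaller;
   * in a scattered U every point of L_U carries exactly q vectors of U, so |l \<inter> U| (hence the
     weight of l) only depends on the set of points L_U;
   * the lines of S partition both U and each transversal space T;
   * two distinct transversal spaces T1, T2 are complementary: T1 + T2 contains U (a counting
     argument) and hence all of V, because U + \<lambda>U = V for \<lambda> \<notin> F_q;
   * the projections of V = T1 \<oplus> T2 fix every line of S and restrict to a bijection U \<rightarrow> T1;
     with them one shows that a line meeting two lines of S carries at most q^2 < q^t vectors
     of U, so every line of weight t is contained in (hence equal to) a line of S. *)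

lemma vzero_eq: "vzero = 0"
  by (simp add: vzero_def fun_eq_iff)

lemma vadd_eq: "vadd u v = u + v"
  by (simp add: vadd_def fun_eq_iff)

lemma smul_add: "smul c (u + v) = smul c u + smul c v"
  by (simp add: smul_def fun_eq_iff algebra_simps)

lemma smul_add2: "smul (c + d) u = smul c u + smul d u"
  by (simp add: smul_def fun_eq_iff algebra_simps)

lemma smul_diff: "smul c (u - v) = smul c u - smul c v"
  by (simp add: smul_def fun_eq_iff algebra_simps)

lemma smul_diff2: "smul (c - d) u = smul c u - smul d u"
  by (simp add: smul_def fun_eq_iff algebra_simps)

lemma smul_smul: "smul c (smul d u) = smul (c * d) u"
  by (simp add: smul_def fun_eq_iff algebra_simps)

lemma smul_one [simp]: "smul 1 u = u"
  by (simp add: smul_def)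

lemma smul_zero_left [simp]: "smul 0 u = 0"
  by (simp add: smul_def fun_eq_iff)

lemma smul_zero_right [simp]: "smul c 0 = 0"
  by (simp add: smul_def fun_eq_iff)

lemma smul_neg: "smul (- c) u = - smul c u"
  by (simp add: smul_def fun_eq_iff)

lemma smul_eq_0_iff: "smul c (u :: 'm \<Rightarrow> 'a::field) = 0 \<longleftrightarrow> c = 0 \<or> u = 0"
  by (auto simp: smul_def fun_eq_iff)

lemma smul_cancel: "(u :: 'm \<Rightarrow> 'a::field) \<noteq> 0 \<Longrightarrow> smul a u = smul b u \<longleftrightarrow> a = b"
  by (metis smul_diff2 smul_eq_0_iff right_minus_eq)

lemma smul_inverse: "c \<noteq> 0 \<Longrightarrow> smul (inverse c) (smul c u) = (u :: 'm \<Rightarrow> 'a::field)"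
  by (simp add: smul_smul)

lemma Ksubspace_iff: "Ksubspace K W \<longleftrightarrow> 0 \<in> W \<and> (\<forall>u\<in>W. \<forall>v\<in>W. u + v \<in> W)
     \<and> (\<forall>c\<in>K. \<forall>v\<in>W. smul c v \<in> W)"
  by (simp add: Ksubspace_def vzero_eq vadd_eq)

lemma subfield_UNIV: "subfield UNIV"
  by (simp add: subfield_def)

lemma subfield_props:
  assumes "subfield K"
  shows "0 \<in> K" "1 \<in> K" "a \<in> K \<Longrightarrow> b \<in> K \<Longrightarrow> a + b \<in> K" "a \<in> K \<Longrightarrow> b \<in> K \<Longrightarrow> a * b \<in> K"
    "a \<in> K \<Longrightarrow> - a \<in> K" "a \<in> K \<Longrightarrow> inverse a \<in> K"
  using assms by (auto simp: subfield_def)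

lemma subfield_diff: "subfield K \<Longrightarrow> a \<in> K \<Longrightarrow> b \<in> K \<Longrightarrow> a - b \<in> K"
  by (metis diff_conv_add_uminus subfield_props(3,5))

lemma subfield_card: "subfield (K :: 'a::{field,finite} set) \<Longrightarrow> card K \<ge> 2"
proof -
  assume "subfield K"
  then have "{0, 1} \<subseteq> K" by (simp add: subfield_def)
  then have "card {0::'a, 1} \<le> card K" by (intro card_mono) auto
  then show ?thesis by simp
qed

lemma Ksubspace_Int: "Ksubspace K A \<Longrightarrow> Ksubspace K B \<Longrightarrow> Ksubspace K (A \<inter> B)"
  by (simp add: Ksubspace_iff)

lemma Ksubspace_UNIV_imp: "Ksubspace UNIV A \<Longrightarrow> Ksubspace K A"
  by (simp add: Ksubspace_iff)

locale subspace_over =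
  fixes K :: "'a::{field,finite} set" and W :: "('m::finite \<Rightarrow> 'a) set"
  assumes subfield: "subfield K" and subspace: "Ksubspace K W"
begin

lemma zero [simp]: "0 \<in> W"
  using subspace by (simp add: Ksubspace_iff)

lemma add: "u \<in> W \<Longrightarrow> v \<in> W \<Longrightarrow> u + v \<in> W"
  using subspace by (simp add: Ksubspace_iff)

lemma smul: "c \<in> K \<Longrightarrow> v \<in> W \<Longrightarrow> smul c v \<in> W"
  using subspace by (simp add: Ksubspace_iff)

lemma neg: "v \<in> W \<Longrightarrow> - v \<in> W"
  using smul[of "- 1" v] subfield_props(2,5)[OF subfield] by (simp add: smul_neg)

lemma diff: "u \<in> W \<Longrightarrow> v \<in> W \<Longrightarrow> u - v \<in> W"
  using add[OF _ neg] by (metis diff_conv_add_uminus)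

end

lemma subspace_overI: "Ksubspace UNIV W \<Longrightarrow> subspace_over UNIV W"
  by (simp add: subspace_over_def subfield_UNIV)

lemma subspace_extend:
  fixes K :: "'a::{field,finite} set" and W0 :: "('m::finite \<Rightarrow> 'a) set"
  assumes sf: "subfield K" and s0: "Ksubspace K W0" and w: "w \<notin> W0"
  defines "W1 \<equiv> (\<lambda>(x, c). x + smul c w) ` (W0 \<times> K)"
  shows "Ksubspace K W1" "card W1 = card W0 * card K"
    "Ksubspace K W \<Longrightarrow> W0 \<subseteq> W \<Longrightarrow> w \<in> W \<Longrightarrow> W1 \<subseteq> W"
proof -
  interpret W0: subspace_over K W0 using sf s0 by unfold_locales
  note sp = subfield_props[OF sf]
  show "Ksubspace K W1" unfolding Ksubspace_iff
  proof (intro conjI ballI)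
    show "0 \<in> W1" unfolding W1_def using sp(1) by (intro image_eqI[of _ _ "(0, 0)"]) auto
  next
    fix u v assume "u \<in> W1" "v \<in> W1"
    then obtain x c y d where "x \<in> W0" "c \<in> K" "y \<in> W0" "d \<in> K" "u = x + smul c w" "v = y + smul d w"
      unfolding W1_def by auto
    then show "u + v \<in> W1" unfolding W1_def
      by (intro image_eqI[of _ _ "(x + y, c + d)"]) (auto simp: smul_add2 algebra_simps W0.add sp)
  next
    fix a v assume "a \<in> K" "v \<in> W1"
    then obtain y d where "y \<in> W0" "d \<in> K" "v = y + smul d w" unfolding W1_def by auto
    then show "smul a v \<in> W1" unfolding W1_def using \<open>a \<in> K\<close>
      by (intro image_eqI[of _ _ "(smul a y, a * d)"]) (auto simp: smul_add smul_smul W0.smul sp)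
  qed
  have "inj_on (\<lambda>(x, c). x + smul c w) (W0 \<times> K)"
  proof (rule inj_onI, clarsimp)
    fix x c y d assume h: "x \<in> W0" "c \<in> K" "y \<in> W0" "d \<in> K" "x + smul c w = y + smul d w"
    show "x = y \<and> c = d"
    proof (cases "c = d")
      case False
      have "smul (c - d) w = y - x" using h(5) by (simp add: smul_diff2 algebra_simps)
      then have "w = smul (inverse (c - d)) (y - x)" using False smul_inverse[of "c - d" w] by simp
      moreover have "smul (inverse (c - d)) (y - x) \<in> W0"
        using h False by (intro W0.smul W0.diff sp(6) subfield_diff[OF sf])
      ultimately show ?thesis using w by simp
    qed (use h in simp)
  qed
  then show "card W1 = card W0 * card K" unfolding W1_def
    by (simp add: card_image card_cartesian_product)
  show "W1 \<subseteq> W" if "Ksubspace K W" "W0 \<subseteq> W" "w \<in> W"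
  proof -
    interpret W: subspace_over K W using sf that(1) by unfold_locales
    show ?thesis unfolding W1_def using that by (auto intro!: W.add W.smul)
  qed
qed

lemma card_proper_subspace:
  fixes K :: "'a::{field,finite} set" and W0 :: "('m::finite \<Rightarrow> 'a) set"
  assumes sf: "subfield K" and s0: "Ksubspace K W0" and s: "Ksubspace K W" and sub: "W0 \<subset> W"
  shows "card W0 * card K \<le> card W"
proof -
  obtain w where w: "w \<in> W" "w \<notin> W0" using sub by auto
  define W1 where "W1 = (\<lambda>(x, c). x + smul c w) ` (W0 \<times> K)"
  have "W1 \<subseteq> W" "card W1 = card W0 * card K"
    using subspace_extend[OF sf s0 w(2)] s sub w(1) unfolding W1_def by auto
  then show ?thesis by (metis card_mono finite)
qed

text \<open>The size of a K-subspace W is |K| to the power of its dimension; it is proved by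
  extending the zero subspace one vector at a time inside W.\<close>

lemma card_subspace_rel:
  fixes K :: "'a::{field,finite} set" and W0 :: "('m::finite \<Rightarrow> 'a) set"
  assumes sf: "subfield K" and s: "Ksubspace K W"
  shows "Ksubspace K W0 \<Longrightarrow> W0 \<subseteq> W \<Longrightarrow> \<exists>e. card W = card W0 * card K ^ e"
proof (induct "card W - card W0" arbitrary: W0 rule: less_induct)
  case less
  show ?case
  proof (cases "W0 = W")
    case True then show ?thesis by (intro exI[of _ 0]) simp
  next
    case False
    then obtain w where w: "w \<in> W" "w \<notin> W0" using less by auto
    define W1 where "W1 = (\<lambda>(x, c). x + smul c w) ` (W0 \<times> K)"
    have W1: "Ksubspace K W1" "card W1 = card W0 * card K" "W1 \<subseteq> W"
      using subspace_extend[OF sf less(2) w(2)] s less(3) w(1) unfolding W1_def by auto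
    have "card W0 > 0" using subspace_over.zero[OF subspace_over.intro[OF sf less(2)]]
      by (auto simp: card_gt_0_iff)
    then have "card W0 < card W1" using W1(2) subfield_card[OF sf] by simp
    moreover have "card W1 \<le> card W" using W1(3) by (simp add: card_mono)
    ultimately obtain e where "card W = card W1 * card K ^ e"
      using less(1)[OF _ W1(1) W1(3)] by (metis diff_less_mono2 less_le_trans)
    then show ?thesis using W1(2) by (intro exI[of _ "Suc e"]) simp
  qed
qed

lemma card_subspace:
  fixes K :: "'a::{field,finite} set" and W :: "('m::finite \<Rightarrow> 'a) set"
  assumes sf: "subfield K" and s: "Ksubspace K W"
  shows "card W = card K ^ Kdim K W"
proof -
  have "0 \<in> W" using s by (simp add: Ksubspace_iff)
  then obtain e where e: "card W = card K ^ e"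
    using card_subspace_rel[OF sf s, of "{0}"] by (auto simp: Ksubspace_iff)
  have "Kdim K W = e" unfolding Kdim_def
    by (rule the_equality) (use e subfield_card[OF sf] in \<open>auto dest: power_inject_exp[THEN iffD1, rotated]\<close>)
  then show ?thesis using e by simp
qed

lemma Kdim_cong: "card A = card B \<Longrightarrow> Kdim K A = Kdim K B"
  unfolding Kdim_def by simp

lemma pt_subspace: "Ksubspace K (pt u)"
  unfolding Ksubspace_iff pt_def
  by (auto simp: smul_add2[symmetric] smul_smul intro: exI[of _ 0])

lemma pt_self: "u \<in> pt u"
  unfolding pt_def by (auto intro: exI[of _ 1])

lemma pt_zero: "0 \<in> pt u"
  unfolding pt_def by (auto intro: exI[of _ 0])

lemma pt_smul: "smul c u \<in> pt u"
  unfolding pt_def by auto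

lemma pt_subset: "Ksubspace UNIV W \<Longrightarrow> u \<in> W \<Longrightarrow> pt u \<subseteq> W"
  unfolding pt_def Ksubspace_iff by auto

lemma pt_in_linset: "u \<in> U \<Longrightarrow> u \<noteq> 0 \<Longrightarrow> pt u \<in> linset U"
  unfolding linset_def by (auto simp: vzero_eq)

lemma card_pt: "(u :: 'm::finite \<Rightarrow> 'a::{field,finite}) \<noteq> 0 \<Longrightarrow> card (pt u) = CARD('a)"
proof -
  assume u: "u \<noteq> 0"
  have "pt u = (\<lambda>c. smul c u) ` UNIV" unfolding pt_def by auto
  moreover have "inj (\<lambda>c. smul c u)" using smul_cancel[OF u] by (auto intro: injI)
  ultimately show ?thesis by (simp add: card_image)
qed

lemma pt_eq: "x \<in> pt u \<Longrightarrow> (x :: 'm::finite \<Rightarrow> 'a::{field,finite}) \<noteq> 0 \<Longrightarrow> pt x = pt u"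
proof -
  assume "x \<in> pt u" "x \<noteq> 0"
  then obtain c where c: "x = smul c u" unfolding pt_def by auto
  with \<open>x \<noteq> 0\<close> have "c \<noteq> 0" by auto
  with c have "u = smul (inverse c) x" by (simp add: smul_inverse)
  then show ?thesis unfolding pt_def using c \<open>c \<noteq> 0\<close>
    by (auto simp: smul_smul) (metis field_class.field_inverse mult.assoc mult_1_right)
qed

definition vsum :: "('m \<Rightarrow> 'a::field) set \<Rightarrow> ('m \<Rightarrow> 'a) set \<Rightarrow> ('m \<Rightarrow> 'a) set" where
  "vsum A B = (\<lambda>(a, b). a + b) ` (A \<times> B)"

lemma vsum_subspace:
  fixes A B :: "('m::finite \<Rightarrow> 'a::{field,finite}) set"
  assumes A: "Ksubspace UNIV A" and B: "Ksubspace UNIV B"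
  shows "Ksubspace UNIV (vsum A B)"
proof -
  interpret A: subspace_over UNIV A using A by (rule subspace_overI)
  interpret B: subspace_over UNIV B using B by (rule subspace_overI)
  show ?thesis unfolding Ksubspace_iff
  proof (intro conjI ballI)
    show "0 \<in> vsum A B" unfolding vsum_def by (rule image_eqI[of _ _ "(0, 0)"]) auto
  next
    fix u v assume "u \<in> vsum A B" "v \<in> vsum A B"
    then obtain a b a' b' where "a \<in> A" "b \<in> B" "a' \<in> A" "b' \<in> B" "u = a + b" "v = a' + b'"
      unfolding vsum_def by auto
    then show "u + v \<in> vsum A B" unfolding vsum_def
      by (intro image_eqI[of _ _ "(a + a', b + b')"]) (auto simp: A.add B.add algebra_simps)
  next
    fix c v assume "v \<in> vsum A B"
    then obtain a b where "a \<in> A" "b \<in> B" "v = a + b" unfolding vsum_def by auto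
    then show "smul c v \<in> vsum A B" unfolding vsum_def
      by (intro image_eqI[of _ _ "(smul c a, smul c b)"]) (auto simp: A.smul B.smul smul_add)
  qed
qed

lemma vsum_direct_iff:
  fixes A B :: "('m::finite \<Rightarrow> 'a::{field,finite}) set"
  assumes A: "Ksubspace UNIV A" and B: "Ksubspace UNIV B"
  shows "inj_on (\<lambda>(a, b). a + b) (A \<times> B) \<longleftrightarrow> (\<forall>x\<in>A \<inter> B. x = 0)"
proof -
  interpret A: subspace_over UNIV A using A by (rule subspace_overI)
  interpret B: subspace_over UNIV B using B by (rule subspace_overI)
  show ?thesis
  proof
    assume inj: "inj_on (\<lambda>(a, b). a + b) (A \<times> B)"
    show "\<forall>x\<in>A \<inter> B. x = 0"
    proof
      fix x assume "x \<in> A \<inter> B"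
      then have "(x, 0) = (0, x)" using inj_onD[OF inj, of "(x, 0)" "(0, x)"] by auto
      then show "x = 0" by simp
    qed
  next
    assume triv: "\<forall>x\<in>A \<inter> B. x = 0"
    show "inj_on (\<lambda>(a, b). a + b) (A \<times> B)"
    proof (rule inj_onI, clarsimp)
      fix a b a' b' assume h: "a \<in> A" "b \<in> B" "a' \<in> A" "b' \<in> B" "a + b = a' + b'"
      then have "a - a' = b' - b" by (simp add: algebra_simps)
      moreover have "a - a' \<in> A" "b' - b \<in> B" using h by (auto intro: A.diff B.diff)
      ultimately have "a - a' \<in> A \<inter> B" by simp
      then have "a - a' = 0" using triv by blast
      then show "a = a' \<and> b = b'" using h(5) by simp
    qed
  qed
qed

lemma line_span_two:
  fixes s :: "('m::finite \<Rightarrow> 'a::{field,finite}) set"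
  assumes s: "Ksubspace UNIV s" and cs: "card s = CARD('a) ^ 2" and ab: "a \<in> s" "b \<in> s"
    and a0: "a \<noteq> 0" and b: "b \<notin> pt a"
  shows "s = (\<lambda>(c, d). smul c a + smul d b) ` (UNIV \<times> UNIV)"
proof -
  interpret s: subspace_over UNIV s using s by (rule subspace_overI)
  have inj: "inj_on (\<lambda>(c, d). smul c a + smul d b) (UNIV \<times> UNIV)"
  proof (rule inj_onI, clarsimp)
    fix c d c' d' assume e: "smul c a + smul d b = smul c' a + smul d' b"
    show "c = c' \<and> d = d'"
    proof (cases "d = d'")
      case True then show ?thesis using e smul_cancel[OF a0] by simp
    next
      case False
      have "smul (d - d') b = smul (c' - c) a" using e by (simp add: smul_diff2 algebra_simps)
      then have "b = smul (inverse (d - d')) (smul (c' - c) a)"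
        using smul_inverse[of "d - d'" b] False by simp
      then have "b \<in> pt a" by (simp add: smul_smul pt_smul)
      then show ?thesis using b by simp
    qed
  qed
  have "card ((\<lambda>(c, d). smul c a + smul d b) ` (UNIV \<times> UNIV)) = CARD('a) ^ 2"
    using card_image[OF inj] by (simp add: card_cartesian_product power2_eq_square)
  moreover have "(\<lambda>(c, d). smul c a + smul d b) ` (UNIV \<times> UNIV) \<subseteq> s"
    using ab by (auto intro!: s.add s.smul)
  ultimately show ?thesis using cs by (metis card_subset_eq finite)
qed

section \<open>Scattered linear sets\<close>

lemma scattered_point_card:
  fixes K :: "'a::{field,finite} set" and U :: "('m::finite \<Rightarrow> 'a) set"
  assumes sf: "subfield K" and sU: "Ksubspace K U" and sc: "scattered K U"
    and P: "P \<in> linset U"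
  shows "card (P \<inter> U) = card K"
proof -
  have "Kdim K (P \<inter> U) = 1" using sc P by (simp add: scattered_def weight_def)
  moreover obtain u where "P = pt u" using P unfolding linset_def by auto
  ultimately show ?thesis using card_subspace[OF sf Ksubspace_Int[OF pt_subspace sU]] by simp
qed

lemma scattered_scalar:
  fixes K :: "'a::{field,finite} set" and U :: "('m::finite \<Rightarrow> 'a) set"
  assumes sf: "subfield K" and sU: "Ksubspace K U" and sc: "scattered K U"
    and u: "u \<in> U" "u \<noteq> 0" and a: "smul a u \<in> U"
  shows "a \<in> K"
proof -
  interpret U: subspace_over K U using sf sU by unfold_locales
  have "card (pt u \<inter> U) = card K"
    using scattered_point_card[OF sf sU sc pt_in_linset[OF u]] .
  moreover have Ku: "(\<lambda>c. smul c u) ` K \<subseteq> pt u \<inter> U" using pt_smul U.smul u by auto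
  moreover have "card ((\<lambda>c. smul c u) ` K) = card K"
    by (rule card_image) (auto intro: inj_onI simp: smul_cancel[OF u(2)])
  ultimately have "(\<lambda>c. smul c u) ` K = pt u \<inter> U" by (metis card_subset_eq finite)
  moreover have "smul a u \<in> pt u \<inter> U" using a pt_smul by auto
  ultimately obtain c where "c \<in> K" "smul a u = smul c u" by auto
  then show ?thesis using smul_cancel[OF u(2)] by simp
qed

lemma card_Int_scattered:
  fixes K :: "'a::{field,finite} set" and U :: "('m::finite \<Rightarrow> 'a) set"
  assumes sf: "subfield K" and sU: "Ksubspace K U" and sc: "scattered K U"
    and l: "Ksubspace UNIV l"
  shows "card (l \<inter> U) = 1 + (card K - 1) * card {P \<in> linset U. P \<subseteq> l}"
proof -
  let ?I = "{P \<in> linset U. P \<subseteq> l}"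
  have U0: "0 \<in> U" using sU by (simp add: Ksubspace_iff)
  have eq: "l \<inter> U - {0} = (\<Union>P\<in>?I. P \<inter> U - {0})"
  proof
    show "l \<inter> U - {0} \<subseteq> (\<Union>P\<in>?I. P \<inter> U - {0})"
    proof
      fix x assume x: "x \<in> l \<inter> U - {0}"
      then have "pt x \<in> ?I" using pt_subset[OF l] pt_in_linset by auto
      then show "x \<in> (\<Union>P\<in>?I. P \<inter> U - {0})" using x pt_self by blast
    qed
  qed auto
  have "card (l \<inter> U - {0}) = (\<Sum>P\<in>?I. card (P \<inter> U - {0}))"
    unfolding eq
  proof (rule card_UN_disjoint)
    show "\<forall>i\<in>?I. \<forall>j\<in>?I. i \<noteq> j \<longrightarrow> (i \<inter> U - {0}) \<inter> (j \<inter> U - {0}) = {}"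
    proof (intro ballI impI)
      fix i j assume ij: "i \<in> ?I" "j \<in> ?I" "i \<noteq> j"
      obtain a b where "i = pt a" "j = pt b" using ij unfolding linset_def by auto
      then show "(i \<inter> U - {0}) \<inter> (j \<inter> U - {0}) = {}" using ij(3) pt_eq by blast
    qed
  qed auto
  also have "\<dots> = (\<Sum>P\<in>?I. card K - 1)"
  proof (rule sum.cong)
    fix P assume P: "P \<in> ?I"
    then have "0 \<in> P" using pt_zero unfolding linset_def by auto
    then show "card (P \<inter> U - {0}) = card K - 1"
      using scattered_point_card[OF sf sU sc] P U0 by (simp add: card_Diff_singleton)
  qed simp
  finally have "card (l \<inter> U - {0}) = card ?I * (card K - 1)" by simp
  moreover have "Suc (card (l \<inter> U - {0})) = card (l \<inter> U)"
    using U0 l by (intro card_Suc_Diff1) (auto simp: Ksubspace_iff)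
  ultimately show ?thesis by (simp add: mult.commute)
qed

lemma weight_linset_eq:
  fixes K :: "'a::{field,finite} set" and U U' :: "('m::finite \<Rightarrow> 'a) set"
  assumes sf: "subfield K" and "Ksubspace K U" "scattered K U" "Ksubspace K U'" "scattered K U'"
    and "linset U' = linset U" and l: "Ksubspace UNIV l"
  shows "weight K U' l = weight K U l"
  unfolding weight_def
  by (rule Kdim_cong) (use card_Int_scattered[OF sf _ _ l] assms in simp)

text \<open>For \<lambda> \<notin> K the map (u, v) \<mapsto> u + \<lambda>v is injective on U \<times> U, so an F-subspace containing
  a scattered U has at least |U|^2 elements.\<close>

lemma card_subspace_containing_scattered:
  fixes K :: "'a::{field,finite} set" and U :: "('m::finite \<Rightarrow> 'a) set"
  assumes sf: "subfield K" and sU: "Ksubspace K U" and sc: "scattered K U" and K: "K \<noteq> UNIV"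
    and M: "Ksubspace UNIV M" and UM: "U \<subseteq> M"
  shows "card U * card U \<le> card M"
proof -
  interpret U: subspace_over K U using sf sU by unfold_locales
  interpret M: subspace_over UNIV M using M by (rule subspace_overI)
  obtain lam where lam: "lam \<notin> K" using K by auto
  let ?g = "\<lambda>(u, v). u + smul lam v"
  have "inj_on ?g (U \<times> U)"
  proof (rule inj_onI, clarsimp)
    fix u v u' v' assume h: "u \<in> U" "v \<in> U" "u' \<in> U" "v' \<in> U" "u + smul lam v = u' + smul lam v'"
    then have e: "smul lam (v - v') = u' - u" by (simp add: smul_diff algebra_simps)
    have "v = v'"
    proof (rule ccontr)
      assume "v \<noteq> v'"
      moreover have "v - v' \<in> U" "smul lam (v - v') \<in> U" using h e U.diff by auto
      ultimately show False using scattered_scalar[OF sf sU sc] lam by auto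
    qed
    then show "u = u' \<and> v = v'" using h(5) by simp
  qed
  then have "card (?g ` (U \<times> U)) = card U * card U" by (simp add: card_image card_cartesian_product)
  moreover have "?g ` (U \<times> U) \<subseteq> M" using UM by (auto intro!: M.add M.smul)
  ultimately show ?thesis by (metis card_mono finite)
qed

lemma disjoint_family_covers:
  fixes A :: "'i \<Rightarrow> 'b set"
  assumes I: "finite I" and X: "finite X" and sub: "\<forall>i\<in>I. A i \<subseteq> X"
    and dj: "\<forall>i\<in>I. \<forall>j\<in>I. i \<noteq> j \<longrightarrow> A i \<inter> A j = {}"
    and k: "\<forall>i\<in>I. k \<le> card (A i)" and c: "card I * k = card X"
  shows "(\<Union>i\<in>I. A i) = X" "\<forall>i\<in>I. card (A i) = k"
proof -
  have fin: "\<forall>i\<in>I. finite (A i)" using X sub finite_subset by blast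
  have cu: "card (\<Union>i\<in>I. A i) = (\<Sum>i\<in>I. card (A i))" using card_UN_disjoint[OF I fin dj] .
  have ge: "card I * k \<le> (\<Sum>i\<in>I. card (A i))" using sum_mono[of I "\<lambda>_. k" "\<lambda>i. card (A i)"] k by simp
  have subU: "(\<Union>i\<in>I. A i) \<subseteq> X" using sub by auto
  have le: "card (\<Union>i\<in>I. A i) \<le> card X" using card_mono[OF X subU] .
  show "(\<Union>i\<in>I. A i) = X" using card_subset_eq[OF X subU] cu ge le c by simp
  show "\<forall>i\<in>I. card (A i) = k"
  proof (rule ccontr)
    assume "\<not> ?thesis"
    then obtain j where "j \<in> I" "card (A j) \<noteq> k" by auto
    then have "(\<Sum>i\<in>I. k) < (\<Sum>i\<in>I. card (A i))" using k
      by (intro sum_strict_mono_ex1[OF I]) (auto intro!: bexI[of _ j])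
    then show False using cu le c by (simp add: mult.commute)
  qed
qed

lemma dvd_power_minus_one: "(Q :: nat) \<ge> 1 \<Longrightarrow> (Q - 1) dvd (Q ^ n - 1)"
proof (induct n)
  case (Suc n)
  have "Q ^ Suc n - 1 = Q * (Q ^ n - 1) + (Q - 1)"
    using Suc.prems by (simp add: algebra_simps diff_mult_distrib2)
  then show ?case using Suc(1)[OF Suc.prems] by (metis dvd_add dvd_mult dvd_refl)
qed simp

text \<open>The numerical core of the proof that two transversal spaces are complementary: a set of
  size N that splits into a part of size A \<le> N/q and a part of size D < w cannot satisfy
  w \<ge> N/Q when 2 \<le> q < Q.\<close>

lemma counting_contradiction:
  fixes N A D w q Q :: nat
  assumes AqN: "A * q \<le> N" and NAD: "N = A + D" and Dw: "D < w" and wQ: "w * Q \<le> N"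
    and q2: "q \<ge> 2" and qQ: "q < Q"
  shows False
proof -
  have 1: "N * q \<le> N + D * q" using AqN NAD by (simp add: algebra_simps)
  have 2: "D * q < w * q" using Dw q2 by simp
  have 3: "w * Q + w * q \<le> w * Q * q"
  proof -
    have "Q * 2 \<le> Q * q" using q2 by simp
    then have "Q + q \<le> Q * q" using qQ by linarith
    then have "w * (Q + q) \<le> w * (Q * q)" by (rule mult_le_mono2)
    then show ?thesis by (simp add: algebra_simps)
  qed
  obtain r where r: "N = w * Q + r" using wQ le_iff_add by blast
  have "r * 1 \<le> r * q" using q2 by (intro mult_le_mono2) linarith
  then have 4: "w * Q * q + N \<le> N * q + w * Q"
    unfolding r by (simp add: algebra_simps)
  show False using 1 2 3 4 by linarith
qed

section \<open>Linear sets of pseudoregulus type\<close>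

locale pseudoregulus_setting =
  fixes K :: "'a::{field,finite} set" and U :: "('m::finite \<Rightarrow> 'a) set"
    and S :: "('m \<Rightarrow> 'a) set set" and n t :: nat
  assumes n2: "n \<ge> 2" and t3: "t \<ge> 3" and sf: "subfield K"
    and card_F: "CARD('a) = card K ^ t" and card_index: "CARD('m) = 2 * n"
    and pr: "pseudoregulus_type K n t U S"
begin

lemma q_ge_2: "card K \<ge> 2"
  using subfield_card[OF sf] .

lemma q_sq_less_Q: "card K * card K < CARD('a)"
proof -
  have "card K ^ 2 < card K ^ t" using q_ge_2 t3 by (intro power_strict_increasing) auto
  then show ?thesis using card_F by (simp add: power2_eq_square)
qed

lemma q_less_Q: "card K < CARD('a)"
proof -
  have "card K ^ 1 < card K ^ t" using q_ge_2 t3 by (intro power_strict_increasing) auto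
  then show ?thesis using card_F by simp
qed

lemma U_subspace: "Ksubspace K U"
  using pr by (simp add: pseudoregulus_type_def)

lemma U_scattered: "scattered K U"
  using pr by (simp add: pseudoregulus_type_def)

sublocale U: subspace_over K U
  using sf U_subspace by unfold_locales

lemma card_U: "card U = CARD('a) ^ n"
proof -
  have "card U = card K ^ (t * n)"
    using card_subspace[OF sf U_subspace] pr by (simp add: pseudoregulus_type_def)
  then show ?thesis using card_F by (simp add: power_mult)
qed

lemma card_V: "CARD('m \<Rightarrow> 'a) = CARD('a) ^ n * CARD('a) ^ n"
  using card_index n2 by (simp add: card_fun mult_2 power_add)

lemma S_line:
  assumes "s \<in> S"
  shows "Ksubspace UNIV s" "card s = CARD('a) ^ 2" "card (s \<inter> U) = CARD('a)"
proof -
  have l: "is_line s" "weight K U s = t" using pr assms by (auto simp: pseudoregulus_type_def)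
  then show ks: "Ksubspace UNIV s" by (simp add: is_line_def proj_subspace_def)
  show "card s = CARD('a) ^ 2" using l card_subspace[OF subfield_UNIV ks]
    by (simp add: is_line_def proj_subspace_def power2_eq_square)
  show "card (s \<inter> U) = CARD('a)"
    using l card_subspace[OF sf Ksubspace_Int[OF Ksubspace_UNIV_imp[OF ks] U_subspace]] card_F
    by (simp add: weight_def)
qed

lemma S_zero: "s \<in> S \<Longrightarrow> 0 \<in> s"
  using S_line(1) by (simp add: Ksubspace_iff)

lemma S_disjoint: "s1 \<in> S \<Longrightarrow> s2 \<in> S \<Longrightarrow> s1 \<noteq> s2 \<Longrightarrow> x \<in> s1 \<Longrightarrow> x \<in> s2 \<Longrightarrow> x = 0"
  using pr by (auto simp: pseudoregulus_type_def proj_meet_def vzero_eq)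

lemma card_S: "card S * (CARD('a) - 1) = CARD('a) ^ n - 1"
proof -
  have "card K ^ (n * t) = CARD('a) ^ n"
    unfolding card_F power_mult[symmetric] by (simp add: mult.commute)
  then have "card S = (CARD('a) ^ n - 1) div (CARD('a) - 1)"
    using pr card_F unfolding pseudoregulus_type_def by simp
  moreover have "(CARD('a) - 1) dvd (CARD('a) ^ n - 1)" by (intro dvd_power_minus_one) simp
  ultimately show ?thesis by simp
qed

lemma transversal_props:
  assumes "T \<in> transversals n U S"
  shows "Ksubspace UNIV T" "card T = CARD('a) ^ n" "\<And>u. u \<in> T \<Longrightarrow> u \<in> U \<Longrightarrow> u = 0"
    "\<And>s. s \<in> S \<Longrightarrow> \<exists>u. u \<noteq> 0 \<and> u \<in> T \<and> u \<in> s"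
proof -
  have h: "proj_subspace (n - 1) T" "\<forall>P\<in>linset U. \<not> P \<subseteq> T" "\<forall>s\<in>S. proj_meet T s"
    using assms by (auto simp: transversals_def)
  then show ks: "Ksubspace UNIV T" by (simp add: proj_subspace_def)
  show "card T = CARD('a) ^ n"
    using h(1) n2 card_subspace[OF subfield_UNIV ks] by (simp add: proj_subspace_def)
  show "u = 0" if "u \<in> T" "u \<in> U" for u
  proof (rule ccontr)
    assume "u \<noteq> 0"
    then have "pt u \<in> linset U" using pt_in_linset that(2) by blast
    then show False using h(2) pt_subset[OF ks that(1)] by blast
  qed
  show "\<And>s. s \<in> S \<Longrightarrow> \<exists>u. u \<noteq> 0 \<and> u \<in> T \<and> u \<in> s"
    using h(3) by (auto simp: proj_meet_def vzero_eq)
qed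

lemma S_partition:
  assumes X0: "0 \<in> X" and cX: "card X = CARD('a) ^ n" and meet: "\<And>s. s \<in> S \<Longrightarrow> CARD('a) \<le> card (s \<inter> X)"
  shows "\<And>x. x \<in> X \<Longrightarrow> x \<noteq> 0 \<Longrightarrow> \<exists>s\<in>S. x \<in> s" "\<And>s. s \<in> S \<Longrightarrow> card (s \<inter> X) = CARD('a)"
proof -
  have "card (X - {0}) = card S * (CARD('a) - 1)" using X0 cX card_S by (simp add: card_Diff_singleton)
  moreover have "\<forall>s\<in>S. CARD('a) - 1 \<le> card (s \<inter> X - {0})"
    using meet S_zero X0 by (simp add: card_Diff_singleton diff_le_mono)
  moreover have "\<forall>i\<in>S. \<forall>j\<in>S. i \<noteq> j \<longrightarrow> (i \<inter> X - {0}) \<inter> (j \<inter> X - {0}) = {}"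
    using S_disjoint by blast
  ultimately have cov: "(\<Union>s\<in>S. s \<inter> X - {0}) = X - {0}" "\<forall>s\<in>S. card (s \<inter> X - {0}) = CARD('a) - 1"
    using disjoint_family_covers[of S "X - {0}" "\<lambda>s. s \<inter> X - {0}" "CARD('a) - 1"] by auto
  show "\<And>x. x \<in> X \<Longrightarrow> x \<noteq> 0 \<Longrightarrow> \<exists>s\<in>S. x \<in> s" using cov(1) by blast
  show "card (s \<inter> X) = CARD('a)" if "s \<in> S" for s
  proof -
    have "card (s \<inter> X) = Suc (card (s \<inter> X - {0}))"
      using S_zero[OF that] X0 by (intro card_Suc_Diff1[symmetric]) auto
    then show ?thesis using cov(2) that by simp
  qed
qed

lemma U_covered: "u \<in> U \<Longrightarrow> u \<noteq> 0 \<Longrightarrow> \<exists>s\<in>S. u \<in> s"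
  using S_partition(1)[of U] card_U S_line(3) by simp

lemma transversal_meets_line:
  assumes T: "T \<in> transversals n U S" and s: "s \<in> S"
  shows "\<exists>a. a \<noteq> 0 \<and> s \<inter> T = pt a"
proof -
  note tp = transversal_props[OF T]
  have pt_in: "pt u \<subseteq> s' \<inter> T" if "s' \<in> S" "u \<in> T" "u \<in> s'" for s' u
    using pt_subset[OF tp(1)] pt_subset[OF S_line(1)] that by blast
  have "CARD('a) \<le> card (s' \<inter> T)" if s': "s' \<in> S" for s'
  proof -
    obtain u where u: "u \<noteq> 0" "u \<in> T" "u \<in> s'" using tp(4)[OF s'] by blast
    then have "pt u \<subseteq> s' \<inter> T" using pt_in[OF s'] by blast
    then show ?thesis using card_mono[OF finite] card_pt[OF u(1)] by metis
  qed
  then have c: "card (s \<inter> T) = CARD('a)"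
    using S_partition(2)[of T s] tp s by (simp add: Ksubspace_iff)
  obtain a where a: "a \<noteq> 0" "a \<in> T" "a \<in> s" using tp(4)[OF s] by blast
  then have "pt a = s \<inter> T"
    using card_subset_eq[of "s \<inter> T" "pt a"] pt_in[OF s a(2,3)] card_pt[OF a(1)] c by simp
  then show ?thesis using a(1) by blast
qed

subsection \<open>Two distinct transversal spaces are complementary\<close>

lemma line_in_transversal_sum:
  assumes T1: "T1 \<in> transversals n U S" and T2: "T2 \<in> transversals n U S"
    and s: "s \<in> S" and ne: "s \<inter> T1 \<noteq> s \<inter> T2"
  shows "s \<subseteq> vsum T1 T2"
proof -
  obtain a where a: "a \<noteq> 0" "s \<inter> T1 = pt a" using transversal_meets_line[OF T1 s] by blast
  obtain b where b: "b \<noteq> 0" "s \<inter> T2 = pt b" using transversal_meets_line[OF T2 s] by blast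
  have "b \<notin> pt a" using pt_eq[of b a] a(2) b ne by auto
  moreover have "a \<in> s" "b \<in> s" using a(2) b(2) pt_self by blast+
  ultimately have span: "s = (\<lambda>(c, d). smul c a + smul d b) ` (UNIV \<times> UNIV)"
    using line_span_two[OF S_line(1,2)[OF s] _ _ a(1)] by blast
  have "smul c a + smul d b \<in> vsum T1 T2" for c d
  proof -
    have "smul c a \<in> T1" "smul d b \<in> T2" using a b pt_smul by blast+
    then show ?thesis unfolding vsum_def by (intro image_eqI[of _ _ "(smul c a, smul d b)"]) auto
  qed
  then show ?thesis by (subst span) auto
qed

text \<open>The lines of S meeting T1 and T2 in the same point give disjoint sets of nonzero vectors
  of T1 \<inter> T2, so there are few of them.\<close>

lemma card_lines_through_intersection:
  assumes T1: "T1 \<in> transversals n U S" and T2: "T2 \<in> transversals n U S"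
  shows "card {s \<in> S. s \<inter> T1 = s \<inter> T2} * (CARD('a) - 1) \<le> card (T1 \<inter> T2) - 1"
proof -
  let ?B = "{s \<in> S. s \<inter> T1 = s \<inter> T2}"
  have point: "card (s \<inter> T1 - {0}) = CARD('a) - 1" if s: "s \<in> ?B" for s
  proof -
    obtain a where "a \<noteq> 0" "s \<inter> T1 = pt a" using s transversal_meets_line[OF T1] by blast
    then show ?thesis by (simp add: card_pt pt_zero card_Diff_singleton)
  qed
  have dj: "\<forall>i\<in>?B. \<forall>j\<in>?B. i \<noteq> j \<longrightarrow> (i \<inter> T1 - {0}) \<inter> (j \<inter> T1 - {0}) = {}"
    using S_disjoint by blast
  have "card ?B * (CARD('a) - 1) = (\<Sum>s\<in>?B. card (s \<inter> T1 - {0}))" using point by simp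
  also have "\<dots> = card (\<Union>s\<in>?B. s \<inter> T1 - {0})"
    by (rule card_UN_disjoint[symmetric, OF _ _ dj]) simp_all
  also have "\<dots> \<le> card (T1 \<inter> T2 - {0})" by (rule card_mono) auto
  also have "\<dots> = card (T1 \<inter> T2) - 1"
    using transversal_props(1)[OF T1] transversal_props(1)[OF T2]
    by (intro card_Diff_singleton) (simp add: Ksubspace_iff)
  finally show ?thesis .
qed

text \<open>If U were not contained in T1 + T2, the vectors of U outside T1 + T2 would lie on lines
  of S through T1 \<inter> T2; there are too few of those.\<close>

lemma U_in_transversal_sum:
  assumes T1: "T1 \<in> transversals n U S" and T2: "T2 \<in> transversals n U S" and ne: "T1 \<noteq> T2"
  shows "U \<subseteq> vsum T1 T2"
proof (rule ccontr)
  assume not_sub: "\<not> U \<subseteq> vsum T1 T2"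
  let ?M = "vsum T1 T2" and ?B = "{s \<in> S. s \<inter> T1 = s \<inter> T2}"
  note tp1 = transversal_props[OF T1] and tp2 = transversal_props[OF T2]
  have M: "Ksubspace UNIV ?M" by (rule vsum_subspace[OF tp1(1) tp2(1)])
  have "U - ?M \<subseteq> (\<Union>s\<in>?B. s \<inter> U - {0})"
  proof
    fix u assume u: "u \<in> U - ?M"
    then have "u \<noteq> 0" using M by (auto simp: Ksubspace_iff)
    then obtain s where "s \<in> S" "u \<in> s" using U_covered u by auto
    moreover have "s \<inter> T1 = s \<inter> T2"
      using line_in_transversal_sum[OF T1 T2 \<open>s \<in> S\<close>] \<open>u \<in> s\<close> u by blast
    ultimately show "u \<in> (\<Union>s\<in>?B. s \<inter> U - {0})" using u \<open>u \<noteq> 0\<close> by blast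
  qed
  then have "card (U - ?M) \<le> card (\<Union>s\<in>?B. s \<inter> U - {0})" by (simp add: card_mono)
  also have "\<dots> \<le> (\<Sum>s\<in>?B. card (s \<inter> U - {0}))" by (rule card_UN_le) simp
  also have "\<dots> = card ?B * (CARD('a) - 1)"
    by (simp add: S_line(3) S_zero card_Diff_singleton)
  also have "\<dots> \<le> card (T1 \<inter> T2) - 1" by (rule card_lines_through_intersection[OF T1 T2])
  finally have "card (U - ?M) \<le> card (T1 \<inter> T2) - 1" .
  moreover have "card (T1 \<inter> T2) > 0" using tp1(1) tp2(1) by (auto simp: Ksubspace_iff card_gt_0_iff)
  ultimately have small: "card (U - ?M) < card (T1 \<inter> T2)" by linarith
  have "U \<inter> ?M \<subset> U" using not_sub by blast
  then have part: "card (U \<inter> ?M) * card K \<le> card U"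
    by (rule card_proper_subspace[OF sf Ksubspace_Int[OF U_subspace Ksubspace_UNIV_imp[OF M]] U_subspace])
  have split: "card U = card (U \<inter> ?M) + card (U - ?M)"
    by (rule card_Int_Diff) simp
  have "T1 \<noteq> T1 \<inter> T2"
  proof
    assume "T1 = T1 \<inter> T2"
    then have "T1 \<subseteq> T2" by blast
    then show False using ne tp1(2) tp2(2) card_subset_eq[of T2 T1] by simp
  qed
  then have "T1 \<inter> T2 \<subset> T1" by blast
  then have "card (T1 \<inter> T2) * CARD('a) \<le> card T1"
    by (rule card_proper_subspace[OF subfield_UNIV Ksubspace_Int[OF tp1(1) tp2(1)] tp1(1)])
  then have big: "card (T1 \<inter> T2) * CARD('a) \<le> card U" using tp1(2) card_U by simp
  show False by (rule counting_contradiction[OF part split small big q_ge_2 q_less_Q])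
qed

text \<open>Since U + \<lambda>U = V for \<lambda> \<notin> K, the sum T1 + T2 is all of V; comparing sizes the sum is direct.\<close>

lemma transversals_complementary:
  assumes T1: "T1 \<in> transversals n U S" and T2: "T2 \<in> transversals n U S" and ne: "T1 \<noteq> T2"
  shows "\<forall>x\<in>T1 \<inter> T2. x = 0"
proof -
  note tp1 = transversal_props[OF T1] and tp2 = transversal_props[OF T2]
  have "K \<noteq> UNIV" using q_less_Q by auto
  then have "card U * card U \<le> card (vsum T1 T2)"
    using card_subspace_containing_scattered[OF sf U_subspace U_scattered _
        vsum_subspace[OF tp1(1) tp2(1)] U_in_transversal_sum[OF T1 T2 ne]] by blast
  moreover have "card (vsum T1 T2) \<le> card (T1 \<times> T2)"
    unfolding vsum_def by (rule card_image_le) simp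
  ultimately have "card (vsum T1 T2) = card (T1 \<times> T2)"
    using card_U tp1(2) tp2(2) by (simp add: card_cartesian_product)
  then have "inj_on (\<lambda>(a, b). a + b) (T1 \<times> T2)"
    unfolding vsum_def by (rule eq_card_imp_inj_on[rotated]) simp
  then show ?thesis using vsum_direct_iff[OF tp1(1) tp2(1)] by blast
qed

lemma weight_t_line_U_vector:
  assumes "card (l \<inter> U) = CARD('a)" shows "\<exists>u. u \<in> l \<and> u \<in> U \<and> u \<noteq> 0"
proof (rule ccontr)
  assume "\<not> ?thesis"
  then have "card (l \<inter> U) \<le> card {0 :: 'm \<Rightarrow> 'a}" by (intro card_mono) auto
  then show False using assms q_less_Q q_ge_2 by simp
qed

text \<open>If all vectors of U on a line l of weight t lie on a line s of S then l = s: otherwise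
  l \<inter> s would be a single point carrying q < q^t vectors of U.\<close>

lemma line_within_member:
  assumes l: "Ksubspace UNIV l" and cl: "card l = CARD('a) ^ 2" and clU: "card (l \<inter> U) = CARD('a)"
    and s: "s \<in> S" and sub: "l \<inter> U \<subseteq> s"
  shows "l = s"
proof (rule ccontr)
  assume "l \<noteq> s"
  then have "l \<inter> s \<subset> l" using card_subset_eq[of s l] cl S_line(2)[OF s] by auto
  then have "card (l \<inter> s) * CARD('a) \<le> CARD('a) * CARD('a)"
    using card_proper_subspace[OF subfield_UNIV Ksubspace_Int[OF l S_line(1)[OF s]] l] cl
    by (simp add: power2_eq_square)
  then have small: "card (l \<inter> s) \<le> CARD('a)" by simp
  obtain u where u: "u \<in> l" "u \<in> U" "u \<noteq> 0" using weight_t_line_U_vector[OF clU] by blast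
  have "pt u \<subseteq> l \<inter> s" using pt_subset[OF l u(1)] pt_subset[OF S_line(1)[OF s]] sub u by blast
  then have "pt u = l \<inter> s"
    using small card_pt[OF u(3)] card_subset_eq[of "l \<inter> s" "pt u"] card_mono[of "l \<inter> s" "pt u"] by simp
  then have "l \<inter> U \<subseteq> pt u \<inter> U" using sub by blast
  then have "CARD('a) \<le> card (pt u \<inter> U)" using card_mono[of "pt u \<inter> U" "l \<inter> U"] clU by simp
  also have "\<dots> = card K"
    using scattered_point_card[OF sf U_subspace U_scattered pt_in_linset[OF u(2,3)]] .
  finally show False using q_less_Q by simp
qed

end

section \<open>The projections of V = T1 \<oplus> T2\<close>

locale two_transversals = pseudoregulus_setting K U S n t
  for K :: "'a::{field,finite} set" and U :: "('m::finite \<Rightarrow> 'a) set" and S n t +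
  fixes T1 T2 :: "('m \<Rightarrow> 'a) set"
  assumes T1: "T1 \<in> transversals n U S" and T2: "T2 \<in> transversals n U S" and distinct: "T1 \<noteq> T2"
begin

sublocale T1: subspace_over UNIV T1
  using transversal_props(1)[OF T1] by (rule subspace_overI)

sublocale T2: subspace_over UNIV T2
  using transversal_props(1)[OF T2] by (rule subspace_overI)

lemma sum_direct: "inj_on (\<lambda>(a, b). a + b) (T1 \<times> T2)"
  using vsum_direct_iff transversal_props(1) T1 T2 transversals_complementary[OF T1 T2 distinct] by blast

lemma sum_UNIV: "vsum T1 T2 = UNIV"
proof -
  have "card (vsum T1 T2) = card T1 * card T2"
    unfolding vsum_def using card_image[OF sum_direct] by (simp add: card_cartesian_product)
  also have "\<dots> = CARD('m \<Rightarrow> 'a)"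
    using transversal_props(2)[OF T1] transversal_props(2)[OF T2] card_V by simp
  finally show ?thesis using card_subset_eq[of UNIV "vsum T1 T2"] by simp
qed

definition proj1 :: "('m \<Rightarrow> 'a) \<Rightarrow> ('m \<Rightarrow> 'a)" where
  "proj1 v = (SOME a. a \<in> T1 \<and> (\<exists>b\<in>T2. v = a + b))"

definition proj2 :: "('m \<Rightarrow> 'a) \<Rightarrow> ('m \<Rightarrow> 'a)" where
  "proj2 v = v - proj1 v"

lemma proj: "proj1 v \<in> T1" "proj2 v \<in> T2" "v = proj1 v + proj2 v"
proof -
  have "v \<in> vsum T1 T2" using sum_UNIV by simp
  then have "\<exists>a. a \<in> T1 \<and> (\<exists>b\<in>T2. v = a + b)" unfolding vsum_def by auto
  then have h: "proj1 v \<in> T1 \<and> (\<exists>b\<in>T2. v = proj1 v + b)" unfolding proj1_def by (rule someI_ex)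
  then show "proj1 v \<in> T1" by simp
  from h obtain b where "b \<in> T2" "v = proj1 v + b" by blast
  then show "proj2 v \<in> T2" unfolding proj2_def by (metis add_diff_cancel_left')
  show "v = proj1 v + proj2 v" unfolding proj2_def by simp
qed

lemma proj_unique:
  assumes "a \<in> T1" "b \<in> T2" shows "proj1 (a + b) = a" "proj2 (a + b) = b"
  using inj_onD[OF sum_direct, of "(proj1 (a + b), proj2 (a + b))" "(a, b)"] proj[of "a + b"] assms
  by auto

lemma proj_linear:
  "proj1 (smul c x + smul d y) = smul c (proj1 x) + smul d (proj1 y)"
  "proj2 (smul c x + smul d y) = smul c (proj2 x) + smul d (proj2 y)"
proof -
  have e: "smul c x + smul d y
      = (smul c (proj1 x) + smul d (proj1 y)) + (smul c (proj2 x) + smul d (proj2 y))"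
    by (subst (1 2) proj(3)) (simp add: smul_add algebra_simps)
  have "smul c (proj1 x) + smul d (proj1 y) \<in> T1" "smul c (proj2 x) + smul d (proj2 y) \<in> T2"
    using proj(1,2) by (auto intro!: T1.add T1.smul T2.add T2.smul)
  then show "proj1 (smul c x + smul d y) = smul c (proj1 x) + smul d (proj1 y)"
      "proj2 (smul c x + smul d y) = smul c (proj2 x) + smul d (proj2 y)"
    unfolding e by (simp_all add: proj_unique)
qed

lemma proj_diff: "proj1 (x - y) = proj1 x - proj1 y" "proj2 (x - y) = proj2 x - proj2 y"
  using proj_linear[of 1 x "- 1" y] by (simp_all add: smul_neg)

text \<open>Every line of S is the span of its points on T1 and T2, hence is fixed by both projections.\<close>

lemma proj_line:
  assumes s: "s \<in> S" and u: "u \<in> s" shows "proj1 u \<in> s" "proj2 u \<in> s"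
proof -
  obtain a where a: "a \<noteq> 0" "s \<inter> T1 = pt a" using transversal_meets_line[OF T1 s] by blast
  obtain b where b: "b \<noteq> 0" "s \<inter> T2 = pt b" using transversal_meets_line[OF T2 s] by blast
  have "b \<notin> pt a"
  proof
    assume "b \<in> pt a"
    then have "b \<in> T1 \<inter> T2" using a(2) b(2) pt_self by blast
    then show False using transversals_complementary[OF T1 T2 distinct] b(1) by blast
  qed
  moreover have "a \<in> s" "b \<in> s" using a(2) b(2) pt_self by blast+
  ultimately have "s = (\<lambda>(c, d). smul c a + smul d b) ` (UNIV \<times> UNIV)"
    using line_span_two[OF S_line(1,2)[OF s] _ _ a(1)] by blast
  then obtain c d where cd: "u = smul c a + smul d b" using u by auto
  have "smul c a \<in> s \<inter> T1" "smul d b \<in> s \<inter> T2" using a(2) b(2) pt_smul by blast+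
  then show "proj1 u \<in> s" "proj2 u \<in> s" using proj_unique[of "smul c a" "smul d b"] cd by auto
qed

text \<open>Since U \<inter> T2 = 0, the first projection maps U bijectively onto T1.\<close>

lemma proj1_inj_on_U: "inj_on proj1 U"
proof (rule inj_onI)
  fix u u' assume h: "u \<in> U" "u' \<in> U" "proj1 u = proj1 u'"
  have "u - u' = proj2 u - proj2 u'" using h(3) proj(3)[of u] proj(3)[of u'] by (metis add_diff_cancel_left)
  then have "u - u' \<in> T2" using T2.diff proj(2) by metis
  moreover have "u - u' \<in> U" using U.diff h by blast
  ultimately have "u - u' = 0" using transversal_props(3)[OF T2] by blast
  then show "u = u'" by simp
qed

lemma proj1_U: "proj1 ` U = T1"
proof -
  have "card (proj1 ` U) = card T1"
    using card_image[OF proj1_inj_on_U] card_U transversal_props(2)[OF T1] by simp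
  moreover have "proj1 ` U \<subseteq> T1" using proj(1) by blast
  ultimately show ?thesis using card_subset_eq[of T1 "proj1 ` U"] by simp
qed

lemma U_member_by_projection:
  assumes z: "z \<in> U" and s: "s \<in> S" and pz: "proj1 z \<in> s" shows "z \<in> s"
proof (cases "z = 0")
  case True then show ?thesis using S_zero[OF s] by simp
next
  case False
  then obtain s' where s': "s' \<in> S" "z \<in> s'" using U_covered z by blast
  have "proj1 z \<noteq> 0"
  proof
    assume "proj1 z = 0"
    then have "z \<in> T2" using proj(2,3)[of z] by simp
    then show False using transversal_props(3)[OF T2] z False by blast
  qed
  moreover have "proj1 z \<in> s'" using proj_line[OF s'] by blast
  ultimately have "s' = s" using S_disjoint[OF s'(1) s] pz by blast
  then show ?thesis using s' by simp
qed

text \<open>Write the vector as u' + u'' with u' \<in> U chosen so that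
  proj1 u' = a proj1 u1; then u' \<in> s1, u'' \<in> s2, and comparing second projections inside the
  disjoint lines s1, s2 gives u' = a u1.\<close>

lemma secant_coefficient:
  assumes s1: "s1 \<in> S" and s2: "s2 \<in> S" and ne: "s1 \<noteq> s2"
    and u1: "u1 \<in> U" "u1 \<in> s1" "u1 \<noteq> 0" and u2: "u2 \<in> U" "u2 \<in> s2"
    and uU: "smul a u1 + smul b u2 \<in> U"
  shows "a \<in> K"
proof -
  interpret s1: subspace_over UNIV s1 using S_line(1)[OF s1] by (rule subspace_overI)
  interpret s2: subspace_over UNIV s2 using S_line(1)[OF s2] by (rule subspace_overI)
  have p1: "proj1 u1 \<in> s1" "proj2 u1 \<in> s1" using proj_line[OF s1 u1(2)] by blast+
  have p2: "proj1 u2 \<in> s2" "proj2 u2 \<in> s2" using proj_line[OF s2 u2(2)] by blast+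
  have "smul a (proj1 u1) \<in> T1" using T1.smul proj(1) by blast
  then obtain u' where u': "u' \<in> U" "proj1 u' = smul a (proj1 u1)" using proj1_U by (metis imageE)
  have u's1: "u' \<in> s1" using U_member_by_projection[OF u'(1) s1] u'(2) s1.smul p1(1) by simp
  define u'' where "u'' = smul a u1 + smul b u2 - u'"
  have u''U: "u'' \<in> U" unfolding u''_def using U.diff uU u'(1) by blast
  have "proj1 u'' = smul b (proj1 u2)" unfolding u''_def proj_diff proj_linear u'(2) by simp
  then have "u'' \<in> s2" using U_member_by_projection[OF u''U s2] s2.smul p2(1) by simp
  define z where "z = smul a (proj2 u1) - proj2 u'"
  have "z \<in> s1" unfolding z_def using s1.diff s1.smul p1(2) proj_line[OF s1 u's1] by simp
  moreover have "z = proj2 u'' - smul b (proj2 u2)"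
    unfolding z_def u''_def proj_diff proj_linear by (simp add: algebra_simps)
  then have "z \<in> s2" using s2.diff s2.smul p2(2) proj_line[OF s2 \<open>u'' \<in> s2\<close>] by simp
  ultimately have "z = 0" using S_disjoint[OF s1 s2 ne] by blast
  then have "proj2 u' = smul a (proj2 u1)" unfolding z_def by simp
  then have "u' = smul a u1" using proj(3)[of u'] proj(3)[of u1] u'(2) by (metis smul_add)
  then show "a \<in> K" using scattered_scalar[OF sf U_subspace U_scattered u1(1) u1(3)] u'(1) by simp
qed

text \<open>Otherwise it meets two lines s1, s2 of S in
  vectors u1, u2 of U spanning it, and all its vectors in U are K-combinations of u1, u2, which
  are only q^2 < q^t many.\<close>

lemma weight_t_line_in_S:
  assumes l: "Ksubspace UNIV l" and cl: "card l = CARD('a) ^ 2" and clU: "card (l \<inter> U) = CARD('a)"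
  shows "l \<in> S"
proof -
  obtain u1 where u1: "u1 \<in> l" "u1 \<in> U" "u1 \<noteq> 0" using weight_t_line_U_vector[OF clU] by blast
  then obtain s1 where s1: "s1 \<in> S" "u1 \<in> s1" using U_covered by blast
  show ?thesis
  proof (cases "l \<inter> U \<subseteq> s1")
    case True
    then show ?thesis using line_within_member[OF l cl clU s1(1)] s1(1) by simp
  next
    case False
    then obtain u2 where u2: "u2 \<in> l" "u2 \<in> U" "u2 \<notin> s1" by blast
    then have u2_0: "u2 \<noteq> 0" using S_zero[OF s1(1)] by blast
    then obtain s2 where s2: "s2 \<in> S" "u2 \<in> s2" using U_covered u2 by blast
    have ne: "s1 \<noteq> s2" using s2 u2 by blast
    have "u2 \<notin> pt u1" using pt_subset[OF S_line(1)[OF s1(1)] s1(2)] u2(3) by blast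
    then have span: "l = (\<lambda>(c, d). smul c u1 + smul d u2) ` (UNIV \<times> UNIV)"
      using line_span_two[OF l cl u1(1) u2(1) u1(3)] by blast
    have "l \<inter> U \<subseteq> (\<lambda>(c, d). smul c u1 + smul d u2) ` (K \<times> K)"
    proof
      fix u assume u: "u \<in> l \<inter> U"
      then obtain a b where ab: "u = smul a u1 + smul b u2" using span by auto
      have uU: "smul a u1 + smul b u2 \<in> U" using u ab by simp
      then have "a \<in> K" by (rule secant_coefficient[OF s1(1) s2(1) ne u1(2) s1(2) u1(3) u2(2) s2(2)])
      moreover have "smul b u2 + smul a u1 \<in> U" using uU by (simp add: add.commute)
      then have "b \<in> K" by (rule secant_coefficient[OF s2(1) s1(1) ne[symmetric] u2(2) s2(2) u2_0 u1(2) s1(2)])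
      ultimately show "u \<in> (\<lambda>(c, d). smul c u1 + smul d u2) ` (K \<times> K)" using ab by auto
    qed
    then have "card (l \<inter> U) \<le> card ((\<lambda>(c, d). smul c u1 + smul d u2) ` (K \<times> K))"
      by (simp add: card_mono)
    also have "\<dots> \<le> card K * card K" using card_image_le[of "K \<times> K"] by (simp add: card_cartesian_product)
    finally show ?thesis using clU q_sq_less_Q by simp
  qed
qed

end

context pseudoregulus_setting
begin

lemma S_eq_weight_t_lines: "S = {s. is_line s \<and> weight K U s = t}"
proof
  show "S \<subseteq> {s. is_line s \<and> weight K U s = t}" using pr by (auto simp: pseudoregulus_type_def)
  show "{s. is_line s \<and> weight K U s = t} \<subseteq> S"
  proof
    fix l assume "l \<in> {s. is_line s \<and> weight K U s = t}"
    then have l: "is_line l" "weight K U l = t" by auto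
    have ks: "Ksubspace UNIV l" using l by (simp add: is_line_def proj_subspace_def)
    have cl: "card l = CARD('a) ^ 2" using l card_subspace[OF subfield_UNIV ks]
      by (simp add: is_line_def proj_subspace_def power2_eq_square)
    have clU: "card (l \<inter> U) = CARD('a)"
      using l card_subspace[OF sf Ksubspace_Int[OF Ksubspace_UNIV_imp[OF ks] U_subspace]] card_F
      by (simp add: weight_def)
    have "card (transversals n U S) = 2" using pr by (simp add: pseudoregulus_type_def)
    then obtain T1 T2 where "transversals n U S = {T1, T2}" "T1 \<noteq> T2" by (auto simp: card_2_iff)
    then interpret two_transversals K U S n t T1 T2 by unfold_locales auto
    show "l \<in> S" using weight_t_line_in_S[OF ks cl clU] .
  qed
qed

end

theorem corollary3p3:
  fixes K :: "'a::{field,finite} set"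
    and U :: "('m::finite \<Rightarrow> 'a) set"
    and S :: "('m \<Rightarrow> 'a) set set"
    and n t :: nat
  assumes "n \<ge> 2" and "t \<ge> 3"
    and "subfield K" and "card (UNIV :: 'a set) = card K ^ t"
    and "card (UNIV :: 'm set) = 2 * n"
    and "pseudoregulus_type K n t U S"
  shows "S = {s. is_line s \<and> weight K U s = t}
    \<and> (\<forall>U' S'. pseudoregulus_type K n t U' S' \<and> linset U' = linset U
          \<longrightarrow> S' = S \<and> transversals n U' S' = transversals n U S)"
proof (intro conjI allI impI)
  interpret P: pseudoregulus_setting K U S n t using assms by unfold_locales
  show S: "S = {s. is_line s \<and> weight K U s = t}" by (rule P.S_eq_weight_t_lines)
  fix U' S' assume h: "pseudoregulus_type K n t U' S' \<and> linset U' = linset U"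
  interpret P': pseudoregulus_setting K U' S' n t using assms h by unfold_locales auto
  have "weight K U' l = weight K U l" if "is_line l" for l
    using weight_linset_eq[OF assms(3) P.U_subspace P.U_scattered P'.U_subspace P'.U_scattered] h that
    by (simp add: is_line_def proj_subspace_def)
  then show "S' = S" unfolding S P'.S_eq_weight_t_lines by auto
  then show "transversals n U' S' = transversals n U S" using h by (simp add: transversals_def)
qed

end
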